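(* Let $T=([p],E)$ be an undirected tree and let $e=u-v$ be a non-leaf edge of $T$. Let $T_u,T_v$ be the trees obtained by deleting $e$, taking the connected components $T'_u\ni u$ and $T'_v\ni v$, and adding $e$ back to each. Let $Q=\{\operatorname{parting}(\mathcal{T},e):\mathcal{T}\in\mathrm{meq}(T)\}\subseteq\mathrm{meq}(T_u)\times\mathrm{meq}(T_v)$. Then $I_T=I_{T_u}\times_QI_{T_v}$, where the variable $z_{\mathcal{T}}$ of the ambient ring of $I_T$ is identified with the variable $z_{\operatorname{parting}(\mathcal{T},e)}$ of $\mathbb{K}[z_q:q\in Q]$.
   Context: A DAG $\mathcal{G}$ on $[p]$ has parent sets $\mathrm{pa}_{\mathcal{G}}(i)=\{j: j\to i\}$. Its characteristic imset $c_{\mathcal{G}}$ assigns to each $S\subseteq[p]$, $|S|\ge2$, the value $1$ if some $i\in S$ has $S\setminus\{i\}\subseteq\mathrm{pa}_{\mathcal{G}}(i)$, and $0$ otherwise. A v-structure is a triple $i\to j\leftarrow k$ with $i,k$ non-adjacent. The pattern of $\mathcal{G}$ is the partially directed graph obtained by undirecting every edge not belonging to a v-structure; two DAGs are Markov equivalent iff they have the same pattern (equivalently the same skeleton and v-structures, equivalently the same characteristic imset). For an undirected graph $G$, $\mathrm{meq}(G)$ is the set of patterns of DAGs with skeleton $G$; for $\mathcal{P}\in\mathrm{meq}(G)$ fix a DAG $\mathcal{G}(\mathcal{P})$ with that pattern. The characteristic imset ideal $I_G$ is the kernel of $\psi_G:\mathbb{K}[z_{\mathcal{P}}:\mathcal{P}\in\mathrm{meq}(G)]\to\mathbb{K}[t_S:S\subseteq[p],|S|\ge2]$,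 $z_{\mathcal{P}}\mapsto\prod_{S:c_{\mathcal{G}(\mathcal{P})}(S)=1}t_S$. A non-leaf edge is an edge neither of whose endpoints is a leaf. For $\mathcal{T}\in\mathrm{meq}(T)$, $\operatorname{parting}(\mathcal{T},e)=(\mathcal{T}_u,\mathcal{T}_v)$ where $\mathcal{T}_u,\mathcal{T}_v$ are the induced partially directed subgraphs of $\mathcal{T}$ on the vertex sets of $T_u,T_v$, with the edge $e$ modified as follows: if $u\to v$ in $\mathcal{T}$ then $u\to v$ in $\mathcal{T}_v$ and $u-v$ in $\mathcal{T}_u$; if $v\to u$ in $\mathcal{T}$ then $v\to u$ in $\mathcal{T}_u$ and $u-v$ in $\mathcal{T}_v$; if $u-v$ in $\mathcal{T}$ then $u-v$ in both. The ideals $I_{T_u}\subseteq\mathbb{K}[x_{\mathcal{P}}:\mathcal{P}\in\mathrm{meq}(T_u)]$ and $I_{T_v}\subseteq\mathbb{K}[y_{\mathcal{P}}:\mathcal{P}\in\mathrm{meq}(T_v)]$. For $Q\subseteq R_1\times R_2$, $\phi_Q:\mathbb{K}[z_{(a,b)}:(a,b)\in Q]\to\mathbb{K}[x_a,y_b]$ is $z_{(a,b)}\mapsto x_ay_b$ and $I\times_QJ:=\phi_Q^{-1}(I+J)$. *)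

theory Defs
  imports Main "HOL-Library.Poly_Mapping"
begin

definition adj :: "nat set set \<Rightarrow> (nat \<times> nat) set" where
  "adj E = {(x, y). {x, y} \<in> E \<and> x \<noteq> y}"

definition is_tree :: "nat set \<Rightarrow> nat set set \<Rightarrow> bool" where
  "is_tree V E \<longleftrightarrow> finite V \<and> V \<noteq> {} \<and>
     (\<forall>f\<in>E. f \<subseteq> V \<and> card f = 2) \<and>
     (\<forall>x\<in>V. \<forall>y\<in>V. (x, y) \<in> (adj E)\<^sup>*) \<and>
     card E + 1 = card V"

definition degree :: "nat set set \<Rightarrow> nat \<Rightarrow> nat" where
  "degree E x = card {y. {x, y} \<in> E \<and> y \<noteq> x}"

definition is_leaf :: "nat set set \<Rightarrow> nat \<Rightarrow> bool" where
  "is_leaf E x \<longleftrightarrow> degree E x = 1"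

definition non_leaf_edge :: "nat set set \<Rightarrow> nat \<Rightarrow> nat \<Rightarrow> bool" where
  "non_leaf_edge E u v \<longleftrightarrow> {u, v} \<in> E \<and> u \<noteq> v \<and> \<not> is_leaf E u \<and> \<not> is_leaf E v"

definition component :: "nat set \<Rightarrow> nat set set \<Rightarrow> nat \<Rightarrow> nat set" where
  "component V E x = {y\<in>V. (x, y) \<in> (adj E)\<^sup>*}"

text \<open>T_u: the component of u in T - e, with e = u - v added back
  (vertex set and edge set).\<close>
definition side_vertices :: "nat set \<Rightarrow> nat set set \<Rightarrow> nat \<Rightarrow> nat \<Rightarrow> nat set" where
  "side_vertices V E u v = component V (E - {{u, v}}) u \<union> {v}"

definition side_edges :: "nat set \<Rightarrow> nat set set \<Rightarrow> nat \<Rightarrow> nat \<Rightarrow> nat set set" where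
  "side_edges V E u v =
     {f \<in> E - {{u, v}}. f \<subseteq> component V (E - {{u, v}}) u} \<union> {{u, v}}"

text \<open>A DAG on V is a set of arrows (i, j), meaning i \<rightarrow> j.\<close>
definition is_dag :: "nat set \<Rightarrow> (nat \<times> nat) set \<Rightarrow> bool" where
  "is_dag V D \<longleftrightarrow> D \<subseteq> V \<times> V \<and> acyclic D"

definition skeleton :: "(nat \<times> nat) set \<Rightarrow> nat set set" where
  "skeleton D = {{i, j} | i j. (i, j) \<in> D}"

definition parents :: "(nat \<times> nat) set \<Rightarrow> nat \<Rightarrow> nat set" where
  "parents D i = {j. (j, i) \<in> D}"

definition adjacent :: "(nat \<times> nat) set \<Rightarrow> nat \<Rightarrow> nat \<Rightarrow> bool" where
  "adjacent D i k \<longleftrightarrow> (i, k) \<in> D \<or> (k, i) \<in> D"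

definition v_structure :: "(nat \<times> nat) set \<Rightarrow> nat \<Rightarrow> nat \<Rightarrow> nat \<Rightarrow> bool" where
  "v_structure D i j k \<longleftrightarrow> (i, j) \<in> D \<and> (k, j) \<in> D \<and> i \<noteq> k \<and> \<not> adjacent D i k"

definition in_v_structure :: "(nat \<times> nat) set \<Rightarrow> nat \<Rightarrow> nat \<Rightarrow> bool" where
  "in_v_structure D i j \<longleftrightarrow> (\<exists>k. v_structure D i j k \<or> v_structure D k j i)"

text \<open>A partially directed graph: (directed edges, undirected edges).\<close>
type_synonym pdg = "(nat \<times> nat) set \<times> nat set set"

definition pattern :: "(nat \<times> nat) set \<Rightarrow> pdg" where
  "pattern D = ({(i, j) \<in> D. in_v_structure D i j},
                {{i, j} | i j. (i, j) \<in> D \<and> \<not> in_v_structure D i j})"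

definition meq :: "nat set \<Rightarrow> nat set set \<Rightarrow> pdg set" where
  "meq V E = {pattern D | D. is_dag V D \<and> skeleton D = E}"

definition rep_dag :: "nat set \<Rightarrow> nat set set \<Rightarrow> pdg \<Rightarrow> (nat \<times> nat) set" where
  "rep_dag V E P = (SOME D. is_dag V D \<and> skeleton D = E \<and> pattern D = P)"

text \<open>Characteristic imset c_D(S) = 1 (as a predicate), for S \<subseteq> V with |S| \<ge> 2.\<close>
definition char_imset :: "(nat \<times> nat) set \<Rightarrow> nat set \<Rightarrow> bool" where
  "char_imset D S \<longleftrightarrow> (\<exists>i\<in>S. S - {i} \<subseteq> parents D i)"

text \<open>Polynomials over a field in variables of type 'v: finitely supported maps
  from monomials (finitely supported exponent vectors) to coefficients.\<close>
type_synonym ('v, 'k) mpoly = "('v \<Rightarrow>\<^sub>0 nat) \<Rightarrow>\<^sub>0 'k"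

definition vars :: "('v, 'k::zero) mpoly \<Rightarrow> 'v set" where
  "vars f = (\<Union>m\<in>Poly_Mapping.keys f. Poly_Mapping.keys m)"

definition poly_ring :: "'v set \<Rightarrow> ('v, 'k::zero) mpoly set" where
  "poly_ring W = {f. vars f \<subseteq> W}"

definition var :: "'v \<Rightarrow> ('v, 'k::{zero,one}) mpoly" where
  "var x = Poly_Mapping.single (Poly_Mapping.single x 1) 1"

text \<open>The K-algebra homomorphism sending each variable x to the monomial sigma x.\<close>
definition mono_exp :: "('v \<Rightarrow> ('w \<Rightarrow>\<^sub>0 nat)) \<Rightarrow> ('v \<Rightarrow>\<^sub>0 nat) \<Rightarrow> ('w \<Rightarrow>\<^sub>0 nat)" where
  "mono_exp \<sigma> m = (\<Sum>x\<in>Poly_Mapping.keys m. \<Sum>i<Poly_Mapping.lookup m x. \<sigma> x)"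

definition mono_map :: "('v \<Rightarrow> ('w \<Rightarrow>\<^sub>0 nat)) \<Rightarrow> ('v, 'k::comm_ring_1) mpoly \<Rightarrow> ('w, 'k) mpoly" where
  "mono_map \<sigma> f = (\<Sum>m\<in>Poly_Mapping.keys f.
       Poly_Mapping.single (mono_exp \<sigma> m) (Poly_Mapping.lookup f m))"

definition ideal_gen_in :: "'a::comm_ring_1 set \<Rightarrow> 'a set \<Rightarrow> 'a set" where
  "ideal_gen_in R X = {f. \<exists>F h. finite F \<and> F \<subseteq> X \<and> (\<forall>g\<in>F. h g \<in> R) \<and>
                              f = (\<Sum>g\<in>F. h g * g)}"

text \<open>psi_G: z_P \<mapsto> prod of t_S over S with c_{G(P)}(S) = 1.\<close>
definition psi_mono :: "nat set \<Rightarrow> nat set set \<Rightarrow> pdg \<Rightarrow> (nat set \<Rightarrow>\<^sub>0 nat)" where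
  "psi_mono V E P = (\<Sum>S\<in>{S. S \<subseteq> V \<and> 2 \<le> card S \<and> char_imset (rep_dag V E P) S}.
                        Poly_Mapping.single S 1)"

definition char_imset_ideal :: "nat set \<Rightarrow> nat set set \<Rightarrow> (pdg, 'k::field) mpoly set" where
  "char_imset_ideal V E =
     {f \<in> poly_ring (meq V E). mono_map (psi_mono V E) f = 0}"

definition restrict_pdg :: "nat set \<Rightarrow> nat \<Rightarrow> nat \<Rightarrow> pdg \<Rightarrow> pdg" where
  "restrict_pdg W x y P =
     ({(a, b) \<in> fst P. a \<in> W \<and> b \<in> W} - {(x, y)},
      {f \<in> snd P. f \<subseteq> W} \<union> (if (x, y) \<in> fst P then {{x, y}} else {}))"

definition parting :: "nat set \<Rightarrow> nat set set \<Rightarrow> nat \<Rightarrow> nat \<Rightarrow> pdg \<Rightarrow> pdg \<times> pdg" where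
  "parting V E u v P =
     (restrict_pdg (side_vertices V E u v) u v P,
      restrict_pdg (side_vertices V E v u) v u P)"

text \<open>I \<times>_Q J = phi_Q^{-1}(I + J), where I + J is the ideal of
  K[x_a, y_b : a \<in> A, b \<in> B] generated by I and J (x_a = Inl a, y_b = Inr b).\<close>
definition toric_fiber_product ::
  "('a \<times> 'b) set \<Rightarrow> 'a set \<Rightarrow> 'b set \<Rightarrow> ('a, 'k::field) mpoly set \<Rightarrow> ('b, 'k) mpoly set
     \<Rightarrow> ('a \<times> 'b, 'k) mpoly set" where
  "toric_fiber_product Q A B I J =
     {f \<in> poly_ring Q.
        mono_map (\<lambda>(a, b). Poly_Mapping.single (Inl a) 1 + Poly_Mapping.single (Inr b) 1) f
        \<in> ideal_gen_in (poly_ring (Inl ` A \<union> Inr ` B))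
             (mono_map (\<lambda>a. Poly_Mapping.single (Inl a) 1) ` I \<union>
              mono_map (\<lambda>b. Poly_Mapping.single (Inr b) 1) ` J)}"

end

(*
  For a DAG whose skeleton is a tree, c(S) = 1 forces S to be a star (an edge, or a vertex
  together with at least two of its parents, all arrows then lying in v-structures); hence
  c depends only on the pattern, every such S lies on one side T_u or T_v of the edge uv,
  and on that side it is the characteristic imset of the parted pattern.  So two monomials
  in the z_P have the same image under psi_T exactly when their partings have the same
  images under psi_{T_u} and psi_{T_v}.

  This gluing property alone gives the toric fibre product.  A toric ideal is spanned by
  binomials, and x^(A+B) - x^(A'+B') = x^B (x^A - x^A') + x^A' (x^B - x^B') splits a glued
  binomial into the two factors; conversely I + J lies in the kernel of the monomial map
  that sends x_a and y_b into disjoint copies of the targets of psi_{T_u} and psi_{T_v},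
  whose fibres are those of psi_T.
*)

theory Submission
  imports Defs
begin

section \<open>Monomial maps\<close>

abbreviation rename_exp :: "('v \<Rightarrow> 'u) \<Rightarrow> ('v \<Rightarrow>\<^sub>0 nat) \<Rightarrow> ('u \<Rightarrow>\<^sub>0 nat)" where
  "rename_exp h \<equiv> mono_exp (\<lambda>x. Poly_Mapping.single (h x) 1)"

abbreviation rename :: "('v \<Rightarrow> 'u) \<Rightarrow> ('v, 'k::comm_ring_1) mpoly \<Rightarrow> ('u, 'k) mpoly" where
  "rename h \<equiv> mono_map (\<lambda>x. Poly_Mapping.single (h x) 1)"

lemma lookup_mono_exp:
  "Poly_Mapping.lookup (mono_exp \<sigma> m) w =
     (\<Sum>x\<in>Poly_Mapping.keys m. Poly_Mapping.lookup m x * Poly_Mapping.lookup (\<sigma> x) w)"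
  unfolding mono_exp_def by (simp add: lookup_sum)

lemma lookup_mono_exp_superset:
  assumes "finite K" "Poly_Mapping.keys m \<subseteq> K"
  shows "Poly_Mapping.lookup (mono_exp \<sigma> m) w =
     (\<Sum>x\<in>K. Poly_Mapping.lookup m x * Poly_Mapping.lookup (\<sigma> x) w)"
  unfolding lookup_mono_exp
  by (rule sum.mono_neutral_left) (use assms in \<open>auto simp: in_keys_iff\<close>)

lemma mono_exp_add: "mono_exp \<sigma> (a + b) = mono_exp \<sigma> a + mono_exp \<sigma> b"
proof (rule poly_mapping_eqI)
  fix w
  have "Poly_Mapping.keys (a + b) \<subseteq> Poly_Mapping.keys a \<union> Poly_Mapping.keys b"
    by (rule keys_add)
  then show "Poly_Mapping.lookup (mono_exp \<sigma> (a + b)) w =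
      Poly_Mapping.lookup (mono_exp \<sigma> a + mono_exp \<sigma> b) w"
    by (simp add: lookup_add lookup_mono_exp_superset[of "Poly_Mapping.keys a \<union> Poly_Mapping.keys b"]
        algebra_simps sum.distrib)
qed

lemma mono_exp_single_1 [simp]: "mono_exp \<sigma> (Poly_Mapping.single x 1) = \<sigma> x"
  unfolding mono_exp_def by simp

lemma mono_exp_plus_fun: "mono_exp (\<lambda>x. \<sigma> x + \<tau> x) m = mono_exp \<sigma> m + mono_exp \<tau> m"
  by (rule poly_mapping_eqI) (simp add: lookup_add lookup_mono_exp algebra_simps sum.distrib)

lemma mono_exp_cong:
  "(\<And>x. x \<in> Poly_Mapping.keys m \<Longrightarrow> \<sigma> x = \<tau> x) \<Longrightarrow> mono_exp \<sigma> m = mono_exp \<tau> m"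
  unfolding mono_exp_def by (rule sum.cong) auto

lemma keys_mono_exp:
  "Poly_Mapping.keys (mono_exp \<sigma> m) \<subseteq> (\<Union>x\<in>Poly_Mapping.keys m. Poly_Mapping.keys (\<sigma> x))"
proof
  fix w assume "w \<in> Poly_Mapping.keys (mono_exp \<sigma> m)"
  then have "(\<Sum>x\<in>Poly_Mapping.keys m. Poly_Mapping.lookup m x * Poly_Mapping.lookup (\<sigma> x) w) \<noteq> 0"
    by (simp add: in_keys_iff lookup_mono_exp)
  then obtain x where "x \<in> Poly_Mapping.keys m"
      "Poly_Mapping.lookup m x * Poly_Mapping.lookup (\<sigma> x) w \<noteq> 0"
    by (meson sum.not_neutral_contains_not_neutral)
  then show "w \<in> (\<Union>x\<in>Poly_Mapping.keys m. Poly_Mapping.keys (\<sigma> x))"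
    by (auto simp: in_keys_iff)
qed

lemma keys_rename_exp: "Poly_Mapping.keys (rename_exp h m) \<subseteq> h ` Poly_Mapping.keys m"
  using keys_mono_exp[of "\<lambda>x. Poly_Mapping.single (h x) 1" m] by auto

lemma lookup_mono_exp_restrict:
  assumes "\<And>x. x \<in> Poly_Mapping.keys m \<Longrightarrow>
      Poly_Mapping.lookup (\<tau> x) w = (if w \<in> K then Poly_Mapping.lookup (\<sigma> x) w else 0)"
  shows "Poly_Mapping.lookup (mono_exp \<tau> m) w =
      (if w \<in> K then Poly_Mapping.lookup (mono_exp \<sigma> m) w else 0)"
  unfolding lookup_mono_exp using assms by (cases "w \<in> K") auto

lemma mono_exp_mono_exp:
  "mono_exp \<tau> (mono_exp \<sigma> m) = mono_exp (\<lambda>x. mono_exp \<tau> (\<sigma> x)) m"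
proof (rule poly_mapping_eqI)
  fix w
  let ?K = "\<Union>x\<in>Poly_Mapping.keys m. Poly_Mapping.keys (\<sigma> x)"
  let ?c = "\<lambda>x y. Poly_Mapping.lookup m x * Poly_Mapping.lookup (\<sigma> x) y * Poly_Mapping.lookup (\<tau> y) w"
  have fin: "finite ?K" by simp
  have "Poly_Mapping.lookup (mono_exp \<tau> (mono_exp \<sigma> m)) w =
      (\<Sum>y\<in>?K. Poly_Mapping.lookup (mono_exp \<sigma> m) y * Poly_Mapping.lookup (\<tau> y) w)"
    by (rule lookup_mono_exp_superset[OF fin keys_mono_exp])
  also have "\<dots> = (\<Sum>y\<in>?K. \<Sum>x\<in>Poly_Mapping.keys m. ?c x y)"
    by (simp add: lookup_mono_exp sum_distrib_right)
  also have "\<dots> = (\<Sum>x\<in>Poly_Mapping.keys m. \<Sum>y\<in>?K. ?c x y)"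
    by (rule sum.swap)
  also have "\<dots> = Poly_Mapping.lookup (mono_exp (\<lambda>x. mono_exp \<tau> (\<sigma> x)) m) w"
    unfolding lookup_mono_exp[of "\<lambda>x. mono_exp \<tau> (\<sigma> x)"]
  proof (rule sum.cong[OF refl])
    fix x assume "x \<in> Poly_Mapping.keys m"
    then have "Poly_Mapping.keys (\<sigma> x) \<subseteq> ?K" by blast
    then show "(\<Sum>y\<in>?K. ?c x y) =
        Poly_Mapping.lookup m x * Poly_Mapping.lookup (mono_exp \<tau> (\<sigma> x)) w"
      by (simp add: lookup_mono_exp_superset[OF fin] sum_distrib_left mult.assoc)
  qed
  finally show "Poly_Mapping.lookup (mono_exp \<tau> (mono_exp \<sigma> m)) w =
      Poly_Mapping.lookup (mono_exp (\<lambda>x. mono_exp \<tau> (\<sigma> x)) m) w" .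
qed

lemma mono_exp_rename_exp: "mono_exp \<sigma> (rename_exp h m) = mono_exp (\<lambda>x. \<sigma> (h x)) m"
  by (simp only: mono_exp_mono_exp mono_exp_single_1)

lemma rename_exp_id: "rename_exp (\<lambda>x. x) m = m"
  by (rule poly_mapping_eqI)
    (simp add: lookup_mono_exp lookup_single when_def if_distrib sum.delta' in_keys_iff cong: if_cong)

lemma lookup_rename_exp_inj:
  "inj h \<Longrightarrow> Poly_Mapping.lookup (rename_exp h m) (h x) = Poly_Mapping.lookup m x"
  by (simp add: lookup_mono_exp lookup_single when_def inj_eq if_distrib sum.delta' in_keys_iff
      cong: if_cong)

lemma rename_exp_Inl_Inr_eq_iff:
  "rename_exp Inl a + rename_exp Inr b = rename_exp Inl a' + rename_exp Inr b' \<longleftrightarrow>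
     a = a' \<and> b = b'"
proof
  assume eq: "rename_exp Inl a + rename_exp Inr b = rename_exp Inl a' + rename_exp Inr b'"
  have Inl_Inr: "Poly_Mapping.lookup (rename_exp Inl c) (Inr x) = 0"
    "Poly_Mapping.lookup (rename_exp Inr d) (Inl y) = 0" for c :: "'a \<Rightarrow>\<^sub>0 nat" and d :: "'b \<Rightarrow>\<^sub>0 nat" and x y
    using keys_rename_exp[of Inl c] keys_rename_exp[of Inr d] by (auto simp: in_keys_iff)
  have "Poly_Mapping.lookup a x = Poly_Mapping.lookup a' x" for x
    using arg_cong[OF eq, of "\<lambda>n. Poly_Mapping.lookup n (Inl x)"]
    by (simp only: lookup_add Inl_Inr lookup_rename_exp_inj inj_Inl inj_Inr add_0 add_0_right)
  moreover have "Poly_Mapping.lookup b x = Poly_Mapping.lookup b' x" for x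
    using arg_cong[OF eq, of "\<lambda>n. Poly_Mapping.lookup n (Inr x)"]
    by (simp only: lookup_add Inl_Inr lookup_rename_exp_inj inj_Inl inj_Inr add_0 add_0_right)
  ultimately show "a = a' \<and> b = b'"
    by (simp add: poly_mapping_eqI)
qed simp

lemma mono_exp_eq_iff_restrictions:
  assumes \<tau>\<^sub>1: "\<And>x w. x \<in> M \<Longrightarrow>
      Poly_Mapping.lookup (\<tau>\<^sub>1 x) w = (if w \<in> K\<^sub>1 then Poly_Mapping.lookup (\<sigma> x) w else 0)"
    and \<tau>\<^sub>2: "\<And>x w. x \<in> M \<Longrightarrow>
      Poly_Mapping.lookup (\<tau>\<^sub>2 x) w = (if w \<in> K\<^sub>2 then Poly_Mapping.lookup (\<sigma> x) w else 0)"
    and keys_\<sigma>: "\<And>x. x \<in> M \<Longrightarrow> Poly_Mapping.keys (\<sigma> x) \<subseteq> K\<^sub>1 \<union> K\<^sub>2"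
    and m: "Poly_Mapping.keys m \<subseteq> M" and m': "Poly_Mapping.keys m' \<subseteq> M"
  shows "mono_exp \<sigma> m = mono_exp \<sigma> m' \<longleftrightarrow>
    mono_exp \<tau>\<^sub>1 m = mono_exp \<tau>\<^sub>1 m' \<and> mono_exp \<tau>\<^sub>2 m = mono_exp \<tau>\<^sub>2 m'"
proof -
  have \<tau>: "Poly_Mapping.lookup (mono_exp \<tau>\<^sub>1 n) w =
        (if w \<in> K\<^sub>1 then Poly_Mapping.lookup (mono_exp \<sigma> n) w else 0)"
      "Poly_Mapping.lookup (mono_exp \<tau>\<^sub>2 n) w =
        (if w \<in> K\<^sub>2 then Poly_Mapping.lookup (mono_exp \<sigma> n) w else 0)"
    if "Poly_Mapping.keys n \<subseteq> M" for n w
    by (rule lookup_mono_exp_restrict; use that \<tau>\<^sub>1 \<tau>\<^sub>2 in blast)+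
  have outside: "Poly_Mapping.lookup (mono_exp \<sigma> n) w = 0"
    if "Poly_Mapping.keys n \<subseteq> M" "w \<notin> K\<^sub>1 \<union> K\<^sub>2" for n w
  proof -
    have "w \<notin> Poly_Mapping.keys (mono_exp \<sigma> n)"
      using that keys_\<sigma> keys_mono_exp[of \<sigma> n] by blast
    then show ?thesis
      by (simp add: in_keys_iff)
  qed
  show ?thesis
  proof
    assume "mono_exp \<sigma> m = mono_exp \<sigma> m'"
    then show "mono_exp \<tau>\<^sub>1 m = mono_exp \<tau>\<^sub>1 m' \<and> mono_exp \<tau>\<^sub>2 m = mono_exp \<tau>\<^sub>2 m'"
      by (intro conjI poly_mapping_eqI) (simp_all add: \<tau>[OF m] \<tau>[OF m'])
  next
    assume eq: "mono_exp \<tau>\<^sub>1 m = mono_exp \<tau>\<^sub>1 m' \<and> mono_exp \<tau>\<^sub>2 m = mono_exp \<tau>\<^sub>2 m'"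
    show "mono_exp \<sigma> m = mono_exp \<sigma> m'"
    proof (rule poly_mapping_eqI)
      fix w
      consider "w \<in> K\<^sub>1" | "w \<in> K\<^sub>2" | "w \<notin> K\<^sub>1 \<union> K\<^sub>2"
        by blast
      then show "Poly_Mapping.lookup (mono_exp \<sigma> m) w = Poly_Mapping.lookup (mono_exp \<sigma> m') w"
      proof cases
        case 1
        then show ?thesis
          using arg_cong[OF conjunct1[OF eq], of "\<lambda>n. Poly_Mapping.lookup n w"] by (simp add: \<tau>[OF m] \<tau>[OF m'])
      next
        case 2
        then show ?thesis
          using arg_cong[OF conjunct2[OF eq], of "\<lambda>n. Poly_Mapping.lookup n w"] by (simp add: \<tau>[OF m] \<tau>[OF m'])
      qed (simp add: outside m m')
    qed
  qed
qed

lemma mono_map_superset: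
  assumes "finite K" "Poly_Mapping.keys f \<subseteq> K"
  shows "mono_map \<sigma> f = (\<Sum>m\<in>K. Poly_Mapping.single (mono_exp \<sigma> m) (Poly_Mapping.lookup f m))"
  unfolding mono_map_def
  by (rule sum.mono_neutral_left) (use assms in \<open>auto simp: in_keys_iff\<close>)

lemma mono_map_add: "mono_map \<sigma> (f + g) = mono_map \<sigma> f + mono_map \<sigma> g"
proof -
  let ?K = "Poly_Mapping.keys f \<union> Poly_Mapping.keys g"
  have "Poly_Mapping.keys (f + g) \<subseteq> ?K" by (rule keys_add)
  then show ?thesis
    by (simp add: mono_map_superset[of ?K] lookup_add single_add sum.distrib)
qed

lemma mono_map_zero [simp]: "mono_map \<sigma> 0 = 0"
  unfolding mono_map_def by simp

lemma mono_map_diff: "mono_map \<sigma> (f - g) = mono_map \<sigma> f - mono_map \<sigma> g"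
  by (metis add_diff_cancel_right' diff_add_cancel mono_map_add)

lemma mono_map_single:
  "mono_map \<sigma> (Poly_Mapping.single m c) = Poly_Mapping.single (mono_exp \<sigma> m) c"
  unfolding mono_map_def by (cases "c = 0") auto

lemma mono_map_sum: "mono_map \<sigma> (sum h A) = (\<Sum>a\<in>A. mono_map \<sigma> (h a))"
  by (induction A rule: infinite_finite_induct) (auto simp: mono_map_add)

lemma sum_single_lookup:
  "(\<Sum>m\<in>Poly_Mapping.keys f. Poly_Mapping.single m (Poly_Mapping.lookup f m)) = f"
  by (rule poly_mapping_eqI)
    (simp add: lookup_sum lookup_single when_def sum.delta in_keys_iff cong: if_cong)

lemma single_sum: "Poly_Mapping.single k (sum g A) = (\<Sum>a\<in>A. Poly_Mapping.single k (g a))"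
  by (induction A rule: infinite_finite_induct) (auto simp: single_add)

lemma mono_map_mono_map:
  "mono_map \<tau> (mono_map \<sigma> f) = mono_map (\<lambda>x. mono_exp \<tau> (\<sigma> x)) f"
  by (simp only: mono_map_def[of \<sigma>] mono_map_sum mono_map_single mono_exp_mono_exp)
    (simp only: mono_map_def)

lemma mono_map_rename: "mono_map \<sigma> (rename h f) = mono_map (\<lambda>x. \<sigma> (h x)) f"
  by (simp only: mono_map_mono_map mono_exp_single_1)

lemma mono_map_cong:
  "(\<And>x. x \<in> vars f \<Longrightarrow> \<sigma> x = \<tau> x) \<Longrightarrow> mono_map \<sigma> f = mono_map \<tau> f"
  unfolding mono_map_def vars_def by (intro sum.cong refl arg_cong2[of _ _ _ _ Poly_Mapping.single]
      mono_exp_cong) auto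

lemma rename_id: "rename (\<lambda>x. x) f = f"
  unfolding mono_map_def rename_exp_id by (rule sum_single_lookup)

lemma mono_map_mult: "mono_map \<sigma> (f * g) = mono_map \<sigma> f * mono_map \<sigma> g"
proof -
  let ?fg = "\<lambda>\<mu>. \<Sum>a\<in>Poly_Mapping.keys f. \<Sum>b\<in>Poly_Mapping.keys g.
      Poly_Mapping.single (\<mu> a + \<mu> b) (Poly_Mapping.lookup f a * Poly_Mapping.lookup g b)"
  have "f * g = (\<Sum>a\<in>Poly_Mapping.keys f. Poly_Mapping.single a (Poly_Mapping.lookup f a)) *
      (\<Sum>b\<in>Poly_Mapping.keys g. Poly_Mapping.single b (Poly_Mapping.lookup g b))"
    by (simp only: sum_single_lookup)
  also have "\<dots> = ?fg (\<lambda>a. a)"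
    by (simp add: sum_product mult_single)
  finally have "mono_map \<sigma> (f * g) = ?fg (mono_exp \<sigma>)"
    by (simp add: mono_map_sum mono_map_single mono_exp_add)
  also have "\<dots> = mono_map \<sigma> f * mono_map \<sigma> g"
    by (simp add: mono_map_def sum_product mult_single)
  finally show ?thesis .
qed

lemma lookup_mono_map:
  "Poly_Mapping.lookup (mono_map \<sigma> f) n =
     (\<Sum>m\<in>{m\<in>Poly_Mapping.keys f. mono_exp \<sigma> m = n}. Poly_Mapping.lookup f m)"
  unfolding mono_map_def lookup_sum
  by (simp add: lookup_single when_def sum.inter_filter)

lemma rename_binomial:
  "rename h (Poly_Mapping.single a 1 - Poly_Mapping.single b 1) =
     Poly_Mapping.single (rename_exp h a) 1 - Poly_Mapping.single (rename_exp h b) 1"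
  by (simp only: mono_map_diff mono_map_single)

lemma binomial_add_split:
  fixes a b a' b' :: "'v \<Rightarrow>\<^sub>0 nat"
  shows "Poly_Mapping.single (a + b) 1 - Poly_Mapping.single (a' + b') (1 :: 'k::comm_ring_1) =
     Poly_Mapping.single b 1 * (Poly_Mapping.single a 1 - Poly_Mapping.single a' 1) +
     Poly_Mapping.single a' 1 * (Poly_Mapping.single b 1 - Poly_Mapping.single b' 1)"
  by (simp add: mult_single algebra_simps add.commute[of b a] add.commute[of b a'])

section \<open>Polynomial subrings and their ideals\<close>

lemma vars_single: "vars (Poly_Mapping.single m c) \<subseteq> Poly_Mapping.keys m"
  by (auto simp: vars_def split: if_splits)

lemma vars_add: "vars (f + g) \<subseteq> vars f \<union> vars g"
  unfolding vars_def using keys_add[of f g] by blast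

lemma vars_diff: "vars (f - g) \<subseteq> vars f \<union> vars (g :: ('v, 'k::ab_group_add) mpoly)"
  unfolding vars_def using keys_diff[of f g] by blast

lemma vars_mult: "vars (f * g) \<subseteq> vars f \<union> vars (g :: ('v, 'k::comm_ring_1) mpoly)"
proof
  fix x assume "x \<in> vars (f * g)"
  then obtain m where m: "m \<in> Poly_Mapping.keys (f * g)" "x \<in> Poly_Mapping.keys m"
    unfolding vars_def by blast
  then obtain a b where "m = a + b" "a \<in> Poly_Mapping.keys f" "b \<in> Poly_Mapping.keys g"
    using keys_mult[of f g] by blast
  with m(2) keys_add[of a b] show "x \<in> vars f \<union> vars g"
    unfolding vars_def by blast
qed

lemma vars_sum: "vars (sum h A) \<subseteq> (\<Union>a\<in>A. vars (h a))"
  unfolding vars_def using keys_sum[of h A] by blast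

lemma vars_mono_map: "vars (mono_map \<sigma> f) \<subseteq> (\<Union>x\<in>vars f. Poly_Mapping.keys (\<sigma> x))"
proof -
  have "vars (mono_map \<sigma> f) \<subseteq>
      (\<Union>m\<in>Poly_Mapping.keys f. vars (Poly_Mapping.single (mono_exp \<sigma> m) (Poly_Mapping.lookup f m)))"
    unfolding mono_map_def by (rule vars_sum)
  also have "\<dots> \<subseteq> (\<Union>m\<in>Poly_Mapping.keys f. Poly_Mapping.keys (mono_exp \<sigma> m))"
    by (rule UN_mono[OF order.refl vars_single])
  also have "\<dots> \<subseteq> (\<Union>m\<in>Poly_Mapping.keys f. \<Union>x\<in>Poly_Mapping.keys m. Poly_Mapping.keys (\<sigma> x))"
    by (rule UN_mono[OF order.refl keys_mono_exp])
  also have "\<dots> = (\<Union>x\<in>vars f. Poly_Mapping.keys (\<sigma> x))"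
    unfolding vars_def by blast
  finally show ?thesis .
qed

lemma vars_rename: "vars (rename h f) \<subseteq> h ` vars f"
  using vars_mono_map[of "\<lambda>x. Poly_Mapping.single (h x) 1" f] by auto

lemma poly_ring_zero: "0 \<in> poly_ring W"
  unfolding poly_ring_def vars_def by simp

lemma poly_ring_add: "f \<in> poly_ring W \<Longrightarrow> g \<in> poly_ring W \<Longrightarrow> f + g \<in> poly_ring W"
  unfolding poly_ring_def using vars_add[of f g] by auto

lemma poly_ring_diff:
  "f \<in> poly_ring W \<Longrightarrow> g \<in> poly_ring W \<Longrightarrow> f - (g :: ('v, 'k::ab_group_add) mpoly) \<in> poly_ring W"
  unfolding poly_ring_def using vars_diff[of f g] by auto

lemma poly_ring_mult:
  "f \<in> poly_ring W \<Longrightarrow> g \<in> poly_ring W \<Longrightarrow> f * (g :: ('v, 'k::comm_ring_1) mpoly) \<in> poly_ring W"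
  unfolding poly_ring_def using vars_mult[of f g] by auto

lemma poly_ring_single: "Poly_Mapping.keys m \<subseteq> W \<Longrightarrow> Poly_Mapping.single m c \<in> poly_ring W"
  unfolding poly_ring_def using vars_single[of m c] by auto

lemma poly_ring_one: "(1 :: ('v, 'k::comm_ring_1) mpoly) \<in> poly_ring W"
  using poly_ring_single[of 0 W "1 :: 'k"] by simp

lemma ideal_gen_inI:
  "finite F \<Longrightarrow> F \<subseteq> X \<Longrightarrow> (\<And>g. g \<in> F \<Longrightarrow> h g \<in> R) \<Longrightarrow> f = (\<Sum>g\<in>F. h g * g) \<Longrightarrow>
    f \<in> ideal_gen_in R X"
  unfolding ideal_gen_in_def by blast

lemma ideal_gen_in_zero: "0 \<in> ideal_gen_in R X"
  by (rule ideal_gen_inI[where F = "{}"]) auto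

lemma ideal_gen_in_generator:
  "g \<in> X \<Longrightarrow> g \<in> ideal_gen_in (poly_ring W) (X :: ('v, 'k::comm_ring_1) mpoly set)"
  by (rule ideal_gen_inI[where F = "{g}" and h = "\<lambda>_. 1"])
    (auto intro: poly_ring_one)

lemma ideal_gen_in_add:
  assumes "a \<in> ideal_gen_in (poly_ring W) X" "b \<in> ideal_gen_in (poly_ring W) X"
  shows "a + b \<in> ideal_gen_in (poly_ring W) (X :: ('v, 'k::comm_ring_1) mpoly set)"
proof -
  obtain F1 h1 where 1: "finite F1" "F1 \<subseteq> X" "\<And>g. g \<in> F1 \<Longrightarrow> h1 g \<in> poly_ring W"
      "a = (\<Sum>g\<in>F1. h1 g * g)"
    using assms(1) unfolding ideal_gen_in_def by blast
  obtain F2 h2 where 2: "finite F2" "F2 \<subseteq> X" "\<And>g. g \<in> F2 \<Longrightarrow> h2 g \<in> poly_ring W"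
      "b = (\<Sum>g\<in>F2. h2 g * g)"
    using assms(2) unfolding ideal_gen_in_def by blast
  define h where "h g = (if g \<in> F1 then h1 g else 0) + (if g \<in> F2 then h2 g else 0)" for g
  have "(\<Sum>g\<in>F1 \<union> F2. (if g \<in> F1 then h1 g else 0) * g) = (\<Sum>g\<in>F1. h1 g * g)"
    by (rule sum.mono_neutral_cong_right) (use 1 2 in auto)
  moreover have "(\<Sum>g\<in>F1 \<union> F2. (if g \<in> F2 then h2 g else 0) * g) = (\<Sum>g\<in>F2. h2 g * g)"
    by (rule sum.mono_neutral_cong_right) (use 1 2 in auto)
  ultimately have "a + b = (\<Sum>g\<in>F1 \<union> F2. h g * g)"
    unfolding h_def distrib_right sum.distrib 1(4) 2(4) by simp
  moreover have "h g \<in> poly_ring W" for g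
    unfolding h_def using 1(3) 2(3) poly_ring_zero by (intro poly_ring_add) auto
  moreover have "finite (F1 \<union> F2)" "F1 \<union> F2 \<subseteq> X"
    using 1(1,2) 2(1,2) by auto
  ultimately show ?thesis
    by (intro ideal_gen_inI[where F = "F1 \<union> F2" and h = h])
qed

lemma ideal_gen_in_mult:
  assumes "a \<in> ideal_gen_in (poly_ring W) X" "r \<in> poly_ring W"
  shows "r * a \<in> ideal_gen_in (poly_ring W) (X :: ('v, 'k::comm_ring_1) mpoly set)"
proof -
  obtain F h where F: "finite F" "F \<subseteq> X" "\<And>g. g \<in> F \<Longrightarrow> h g \<in> poly_ring W"
      "a = (\<Sum>g\<in>F. h g * g)"
    using assms(1) unfolding ideal_gen_in_def by blast
  then have "r * a = (\<Sum>g\<in>F. (r * h g) * g)"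
    by (simp add: sum_distrib_left mult.assoc)
  with F assms(2) show ?thesis
    by (intro ideal_gen_inI[where F = F and h = "\<lambda>g. r * h g"]) (simp_all add: poly_ring_mult)
qed

lemma ideal_gen_in_sum:
  "(\<And>a. a \<in> A \<Longrightarrow> h a \<in> ideal_gen_in (poly_ring W) X) \<Longrightarrow>
    sum h A \<in> ideal_gen_in (poly_ring W) (X :: ('v, 'k::comm_ring_1) mpoly set)"
  by (induction A rule: infinite_finite_induct) (auto simp: ideal_gen_in_zero ideal_gen_in_add)

section \<open>Toric ideals\<close>

definition toric_ideal :: "'v set \<Rightarrow> ('v \<Rightarrow> ('w \<Rightarrow>\<^sub>0 nat)) \<Rightarrow> ('v, 'k::comm_ring_1) mpoly set" where
  "toric_ideal M \<sigma> = {f \<in> poly_ring M. mono_map \<sigma> f = 0}"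

lemma char_imset_ideal_eq_toric_ideal:
  "char_imset_ideal V E = toric_ideal (meq V E) (psi_mono V E)"
  unfolding char_imset_ideal_def toric_ideal_def ..

lemma binomial_in_toric_ideal:
  assumes "Poly_Mapping.keys a \<subseteq> M" "Poly_Mapping.keys b \<subseteq> M" "mono_exp \<sigma> a = mono_exp \<sigma> b"
  shows "Poly_Mapping.single a 1 - Poly_Mapping.single b 1 \<in> toric_ideal M \<sigma>"
  unfolding toric_ideal_def
  using assms by (simp add: poly_ring_diff poly_ring_single mono_map_diff mono_map_single)

lemma sum_single_fibrewise_eq_0:
  assumes "mono_map \<sigma> f = 0"
  shows "(\<Sum>m\<in>Poly_Mapping.keys f. Poly_Mapping.single (G (mono_exp \<sigma> m)) (Poly_Mapping.lookup f m)) = 0"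
proof -
  let ?K = "Poly_Mapping.keys f"
  have "(\<Sum>m\<in>?K. Poly_Mapping.single (G (mono_exp \<sigma> m)) (Poly_Mapping.lookup f m)) =
      (\<Sum>n\<in>mono_exp \<sigma> ` ?K. \<Sum>m\<in>{m\<in>?K. mono_exp \<sigma> m = n}.
         Poly_Mapping.single (G n) (Poly_Mapping.lookup f m))"
    by (subst sum.image_gen[of _ _ "mono_exp \<sigma>"]) (auto intro!: sum.cong)
  also have "\<dots> = (\<Sum>n\<in>mono_exp \<sigma> ` ?K. Poly_Mapping.single (G n) (Poly_Mapping.lookup (mono_map \<sigma> f) n))"
    by (simp add: lookup_mono_map single_sum)
  finally show ?thesis
    by (simp add: assms)
qed

text \<open>Toric ideals are spanned by binomials: pick a representative in each fibre of \<open>\<sigma>\<close>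
  among the monomials of \<open>f\<close>; as the coefficients on each fibre sum to zero, \<open>f\<close> is a
  combination of the differences between a monomial and its representative.\<close>

lemma mono_map_in_ideal_gen_if_binomials:
  fixes f :: "('v, 'k::comm_ring_1) mpoly"
  assumes ker: "mono_map \<sigma> f = 0"
    and binomial: "\<And>m m'. m \<in> Poly_Mapping.keys f \<Longrightarrow> m' \<in> Poly_Mapping.keys f \<Longrightarrow>
      mono_exp \<sigma> m = mono_exp \<sigma> m' \<Longrightarrow>
      Poly_Mapping.single (mono_exp \<mu> m) 1 - Poly_Mapping.single (mono_exp \<mu> m') 1
        \<in> ideal_gen_in (poly_ring W) X"
  shows "mono_map \<mu> f \<in> ideal_gen_in (poly_ring W) X"
proof -
  let ?K = "Poly_Mapping.keys f"
  define r where "r n = (SOME m. m \<in> ?K \<and> mono_exp \<sigma> m = n)" for n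
  have r: "r (mono_exp \<sigma> m) \<in> ?K \<and> mono_exp \<sigma> (r (mono_exp \<sigma> m)) = mono_exp \<sigma> m"
    if "m \<in> ?K" for m
    unfolding r_def by (rule someI[of _ m]) (use that in auto)
  let ?G = "\<lambda>n. mono_exp \<mu> (r n)"
  have "mono_map \<mu> f = (\<Sum>m\<in>?K. Poly_Mapping.single 0 (Poly_Mapping.lookup f m) *
        (Poly_Mapping.single (mono_exp \<mu> m) 1 - Poly_Mapping.single (?G (mono_exp \<sigma> m)) 1))
      + (\<Sum>m\<in>?K. Poly_Mapping.single (?G (mono_exp \<sigma> m)) (Poly_Mapping.lookup f m))"
    by (simp add: mono_map_def sum.distrib[symmetric] right_diff_distrib mult_single)
  also have "\<dots> = (\<Sum>m\<in>?K. Poly_Mapping.single 0 (Poly_Mapping.lookup f m) *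
        (Poly_Mapping.single (mono_exp \<mu> m) 1 - Poly_Mapping.single (?G (mono_exp \<sigma> m)) 1))"
    by (simp add: sum_single_fibrewise_eq_0[where G = ?G, OF ker])
  also have "\<dots> \<in> ideal_gen_in (poly_ring W) X"
    using r by (intro ideal_gen_in_sum ideal_gen_in_mult binomial poly_ring_single) auto
  finally show ?thesis .
qed

lemma mono_map_eq_0_if_same_fibres:
  assumes ker: "mono_map \<tau> g = 0"
    and fibres: "\<And>m m'. m \<in> Poly_Mapping.keys g \<Longrightarrow> m' \<in> Poly_Mapping.keys g \<Longrightarrow>
        mono_exp \<tau> m = mono_exp \<tau> m' \<longleftrightarrow> mono_exp \<sigma> m = mono_exp \<sigma> m'"
  shows "mono_map \<sigma> g = 0"
proof (rule poly_mapping_eqI)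
  fix n
  show "Poly_Mapping.lookup (mono_map \<sigma> g) n = Poly_Mapping.lookup 0 n"
  proof (cases "\<exists>m0\<in>Poly_Mapping.keys g. mono_exp \<sigma> m0 = n")
    case False
    then have "{m\<in>Poly_Mapping.keys g. mono_exp \<sigma> m = n} = {}" by auto
    then show ?thesis by (simp only: lookup_mono_map sum.empty lookup_zero)
  next
    case True
    then obtain m0 where m0: "m0 \<in> Poly_Mapping.keys g" "mono_exp \<sigma> m0 = n" by blast
    then have "{m\<in>Poly_Mapping.keys g. mono_exp \<sigma> m = n} =
        {m\<in>Poly_Mapping.keys g. mono_exp \<tau> m = mono_exp \<tau> m0}"
      using fibres by auto
    then have "Poly_Mapping.lookup (mono_map \<sigma> g) n = Poly_Mapping.lookup (mono_map \<tau> g) (mono_exp \<tau> m0)"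
      by (simp add: lookup_mono_map)
    then show ?thesis by (simp add: ker)
  qed
qed

lemma mono_map_eq_0_if_ideal_gen_in:
  assumes "h \<in> ideal_gen_in R X" "\<And>x. x \<in> X \<Longrightarrow> mono_map \<theta> x = 0"
  shows "mono_map \<theta> (h :: ('v, 'k::comm_ring_1) mpoly) = 0"
proof -
  obtain F c where "F \<subseteq> X" "h = (\<Sum>g\<in>F. c g * g)"
    using assms(1) unfolding ideal_gen_in_def by blast
  then show ?thesis
    using assms(2) by (simp add: mono_map_sum mono_map_mult subset_iff)
qed

section \<open>Toric fibre products\<close>

abbreviation pair_monomial :: "'a \<times> 'b \<Rightarrow> ('a + 'b \<Rightarrow>\<^sub>0 nat)" where
  "pair_monomial \<equiv> \<lambda>(a, b). Poly_Mapping.single (Inl a) 1 + Poly_Mapping.single (Inr b) 1"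

lemma mono_exp_pair_monomial:
  "mono_exp (\<lambda>x. pair_monomial (\<pi> x)) m =
     rename_exp Inl (rename_exp (\<lambda>x. fst (\<pi> x)) m) + rename_exp Inr (rename_exp (\<lambda>x. snd (\<pi> x)) m)"
  by (simp only: case_prod_unfold mono_exp_plus_fun mono_exp_rename_exp mono_exp_single_1)

lemma mono_exp_glued:
  "mono_exp (\<lambda>q. rename_exp Inl (\<sigma>\<^sub>A (fst q)) + rename_exp Inr (\<sigma>\<^sub>B (snd q))) n =
     rename_exp Inl (mono_exp (\<lambda>q. \<sigma>\<^sub>A (fst q)) n) + rename_exp Inr (mono_exp (\<lambda>q. \<sigma>\<^sub>B (snd q)) n)"
  by (simp only: mono_exp_plus_fun mono_exp_mono_exp)

text \<open>The map in the statement is \<open>\<phi>\<^sub>Q\<close> followed by \<open>x\<^sub>a \<mapsto> \<sigma>\<^sub>A a\<close>, \<open>y\<^sub>b \<mapsto> \<sigma>\<^sub>B b\<close>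
  (into disjoint copies of the target variables), and the latter kills \<open>I + J\<close>.\<close>

lemma toric_fiber_product_in_kernel:
  fixes g :: "('a \<times> 'b, 'k::field) mpoly"
  assumes "g \<in> toric_fiber_product Q A B (toric_ideal A \<sigma>\<^sub>A) (toric_ideal B \<sigma>\<^sub>B)"
  shows "mono_map (\<lambda>q. rename_exp Inl (\<sigma>\<^sub>A (fst q)) + rename_exp Inr (\<sigma>\<^sub>B (snd q))) g = 0"
proof -
  define \<theta> where "\<theta> = case_sum (\<lambda>a. rename_exp Inl (\<sigma>\<^sub>A a)) (\<lambda>b. rename_exp Inr (\<sigma>\<^sub>B b))"
  have \<theta>_rename: "mono_map \<theta> (rename Inl i) = rename Inl (mono_map \<sigma>\<^sub>A i)"
    "mono_map \<theta> (rename Inr j) = rename Inr (mono_map \<sigma>\<^sub>B j)"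
    for i :: "('a, 'k) mpoly" and j :: "('b, 'k) mpoly"
    by (simp_all only: mono_map_rename mono_map_mono_map \<theta>_def sum.case)
  have kills: "mono_map \<theta> h = 0"
    if "h \<in> rename Inl ` toric_ideal A \<sigma>\<^sub>A \<union> rename Inr ` toric_ideal B \<sigma>\<^sub>B"
    for h :: "('a + 'b, 'k) mpoly"
  proof -
    from that consider i where "i \<in> toric_ideal A \<sigma>\<^sub>A" "h = rename Inl i"
      | j where "j \<in> toric_ideal B \<sigma>\<^sub>B" "h = rename Inr j"
      by blast
    then show ?thesis
      by cases (simp_all only: \<theta>_rename toric_ideal_def mem_Collect_eq mono_map_zero)
  qed
  have "mono_map pair_monomial g \<in> ideal_gen_in (poly_ring (Inl ` A \<union> Inr ` B))
      (rename Inl ` toric_ideal A \<sigma>\<^sub>A \<union> rename Inr ` toric_ideal B \<sigma>\<^sub>B)"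
    using assms unfolding toric_fiber_product_def by blast
  then have "mono_map \<theta> (mono_map pair_monomial g) = 0"
    using kills by (rule mono_map_eq_0_if_ideal_gen_in)
  then show ?thesis
    by (simp only: mono_map_mono_map case_prod_unfold mono_exp_add mono_exp_single_1 \<theta>_def sum.case)
qed

locale monomial_gluing =
  fixes M :: "'v set" and \<sigma> :: "'v \<Rightarrow> ('w \<Rightarrow>\<^sub>0 nat)" and \<pi> :: "'v \<Rightarrow> 'a \<times> 'b"
    and A :: "'a set" and \<sigma>\<^sub>A :: "'a \<Rightarrow> ('wa \<Rightarrow>\<^sub>0 nat)"
    and B :: "'b set" and \<sigma>\<^sub>B :: "'b \<Rightarrow> ('wb \<Rightarrow>\<^sub>0 nat)"
  assumes fst_mem: "x \<in> M \<Longrightarrow> fst (\<pi> x) \<in> A"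
    and snd_mem: "x \<in> M \<Longrightarrow> snd (\<pi> x) \<in> B"
    and same_fibres: "Poly_Mapping.keys m \<subseteq> M \<Longrightarrow> Poly_Mapping.keys m' \<subseteq> M \<Longrightarrow>
      mono_exp \<sigma> m = mono_exp \<sigma> m' \<longleftrightarrow>
        mono_exp (\<lambda>x. \<sigma>\<^sub>A (fst (\<pi> x))) m = mono_exp (\<lambda>x. \<sigma>\<^sub>A (fst (\<pi> x))) m' \<and>
        mono_exp (\<lambda>x. \<sigma>\<^sub>B (snd (\<pi> x))) m = mono_exp (\<lambda>x. \<sigma>\<^sub>B (snd (\<pi> x))) m'"
begin

lemma pair_binomial_in_ideal_gen:
  assumes m: "Poly_Mapping.keys m \<subseteq> M" and m': "Poly_Mapping.keys m' \<subseteq> M"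
    and eq: "mono_exp \<sigma> m = mono_exp \<sigma> m'"
  shows "Poly_Mapping.single (mono_exp (\<lambda>x. pair_monomial (\<pi> x)) m) 1 -
      Poly_Mapping.single (mono_exp (\<lambda>x. pair_monomial (\<pi> x)) m') (1 :: 'k::comm_ring_1)
    \<in> ideal_gen_in (poly_ring (Inl ` A \<union> Inr ` B))
        (rename Inl ` toric_ideal A \<sigma>\<^sub>A \<union> rename Inr ` toric_ideal B \<sigma>\<^sub>B)"
proof -
  let ?a = "rename_exp (\<lambda>x. fst (\<pi> x))" and ?b = "rename_exp (\<lambda>x. snd (\<pi> x))"
  have keys_a: "Poly_Mapping.keys (?a n) \<subseteq> A" and keys_b: "Poly_Mapping.keys (?b n) \<subseteq> B"
    if "Poly_Mapping.keys n \<subseteq> M" for n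
    using that keys_rename_exp[of "\<lambda>x. fst (\<pi> x)" n] keys_rename_exp[of "\<lambda>x. snd (\<pi> x)" n]
      fst_mem snd_mem by blast+
  have "mono_exp (\<lambda>x. \<sigma>\<^sub>A (fst (\<pi> x))) m = mono_exp (\<lambda>x. \<sigma>\<^sub>A (fst (\<pi> x))) m'"
    "mono_exp (\<lambda>x. \<sigma>\<^sub>B (snd (\<pi> x))) m = mono_exp (\<lambda>x. \<sigma>\<^sub>B (snd (\<pi> x))) m'"
    using same_fibres[OF m m'] eq by blast+
  then have fibre_A: "mono_exp \<sigma>\<^sub>A (?a m) = mono_exp \<sigma>\<^sub>A (?a m')"
    and fibre_B: "mono_exp \<sigma>\<^sub>B (?b m) = mono_exp \<sigma>\<^sub>B (?b m')"
    unfolding mono_exp_rename_exp .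
  have "Poly_Mapping.single (?a m) 1 - Poly_Mapping.single (?a m') 1 \<in> (toric_ideal A \<sigma>\<^sub>A :: ('a, 'k) mpoly set)"
    by (rule binomial_in_toric_ideal[OF keys_a[OF m] keys_a[OF m'] fibre_A])
  then have gen_A: "Poly_Mapping.single (rename_exp Inl (?a m)) 1 - Poly_Mapping.single (rename_exp Inl (?a m')) 1
      \<in> rename Inl ` toric_ideal A \<sigma>\<^sub>A \<union> rename Inr ` (toric_ideal B \<sigma>\<^sub>B :: ('b, 'k) mpoly set)"
    unfolding rename_binomial[symmetric] by blast
  have "Poly_Mapping.single (?b m) 1 - Poly_Mapping.single (?b m') 1 \<in> (toric_ideal B \<sigma>\<^sub>B :: ('b, 'k) mpoly set)"
    by (rule binomial_in_toric_ideal[OF keys_b[OF m] keys_b[OF m'] fibre_B])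
  then have gen_B: "Poly_Mapping.single (rename_exp Inr (?b m)) 1 - Poly_Mapping.single (rename_exp Inr (?b m')) 1
      \<in> rename Inl ` (toric_ideal A \<sigma>\<^sub>A :: ('a, 'k) mpoly set) \<union> rename Inr ` toric_ideal B \<sigma>\<^sub>B"
    unfolding rename_binomial[symmetric] by blast
  have "Poly_Mapping.single (rename_exp Inr (?b m)) 1 \<in> (poly_ring (Inl ` A \<union> Inr ` B) :: ('a + 'b, 'k) mpoly set)"
    "Poly_Mapping.single (rename_exp Inl (?a m')) 1 \<in> (poly_ring (Inl ` A \<union> Inr ` B) :: ('a + 'b, 'k) mpoly set)"
    using keys_rename_exp[of Inr "?b m"] keys_rename_exp[of Inl "?a m'"] keys_a[OF m'] keys_b[OF m]
    by (blast intro: poly_ring_single)+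
  with gen_A gen_B show ?thesis
    unfolding mono_exp_pair_monomial binomial_add_split
    by (intro ideal_gen_in_add ideal_gen_in_mult ideal_gen_in_generator)
qed

lemma rename_toric_ideal_subset:
  "rename \<pi> ` (toric_ideal M \<sigma> :: ('v, 'k::field) mpoly set)
     \<subseteq> toric_fiber_product (\<pi> ` M) A B (toric_ideal A \<sigma>\<^sub>A) (toric_ideal B \<sigma>\<^sub>B)"
proof
  fix g :: "('a \<times> 'b, 'k) mpoly"
  assume "g \<in> rename \<pi> ` toric_ideal M \<sigma>"
  then obtain f where f: "f \<in> toric_ideal M \<sigma>" and g: "g = rename \<pi> f"
    by blast
  have keys_f: "Poly_Mapping.keys m \<subseteq> M" if "m \<in> Poly_Mapping.keys f" for m
    using f that unfolding toric_ideal_def poly_ring_def vars_def by blast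
  have "vars g \<subseteq> \<pi> ` M"
    using f vars_rename[of \<pi> f] unfolding g toric_ideal_def poly_ring_def by blast
  moreover have "mono_map pair_monomial g \<in> ideal_gen_in (poly_ring (Inl ` A \<union> Inr ` B))
      (rename Inl ` toric_ideal A \<sigma>\<^sub>A \<union> rename Inr ` toric_ideal B \<sigma>\<^sub>B)"
    unfolding g mono_map_rename
  proof (rule mono_map_in_ideal_gen_if_binomials)
    show "mono_map \<sigma> f = 0"
      using f unfolding toric_ideal_def by blast
    fix m m' assume "m \<in> Poly_Mapping.keys f" "m' \<in> Poly_Mapping.keys f" "mono_exp \<sigma> m = mono_exp \<sigma> m'"
    then show "Poly_Mapping.single (mono_exp (\<lambda>x. pair_monomial (\<pi> x)) m) 1 -
        Poly_Mapping.single (mono_exp (\<lambda>x. pair_monomial (\<pi> x)) m') 1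
      \<in> ideal_gen_in (poly_ring (Inl ` A \<union> Inr ` B))
          (rename Inl ` toric_ideal A \<sigma>\<^sub>A \<union> rename Inr ` toric_ideal B \<sigma>\<^sub>B)"
      by (intro pair_binomial_in_ideal_gen keys_f)
  qed
  ultimately show "g \<in> toric_fiber_product (\<pi> ` M) A B (toric_ideal A \<sigma>\<^sub>A) (toric_ideal B \<sigma>\<^sub>B)"
    unfolding toric_fiber_product_def poly_ring_def by blast
qed

text \<open>On monomials over \<open>\<pi> ` M\<close>, the glued map of \<open>toric_fiber_product_in_kernel\<close> has
  the same fibres as \<open>\<sigma>\<close> composed with a section \<open>\<iota>\<close> of \<open>\<pi>\<close>.\<close>

lemma toric_fiber_product_rename_section_in_kernel:
  fixes g :: "('a \<times> 'b, 'k::field) mpoly"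
  assumes g: "g \<in> toric_fiber_product (\<pi> ` M) A B (toric_ideal A \<sigma>\<^sub>A) (toric_ideal B \<sigma>\<^sub>B)"
    and \<iota>: "\<And>q. q \<in> \<pi> ` M \<Longrightarrow> \<iota> q \<in> M" "\<And>q. q \<in> \<pi> ` M \<Longrightarrow> \<pi> (\<iota> q) = q"
  shows "mono_map \<sigma> (rename \<iota> g) = 0"
proof -
  let ?\<kappa> = "\<lambda>q. rename_exp Inl (\<sigma>\<^sub>A (fst q)) + rename_exp Inr (\<sigma>\<^sub>B (snd q))"
  have \<kappa>: "mono_exp ?\<kappa> n =
      rename_exp Inl (mono_exp (\<lambda>x. \<sigma>\<^sub>A (fst (\<pi> x))) (rename_exp \<iota> n)) +
      rename_exp Inr (mono_exp (\<lambda>x. \<sigma>\<^sub>B (snd (\<pi> x))) (rename_exp \<iota> n))"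
    if n: "Poly_Mapping.keys n \<subseteq> \<pi> ` M" for n
  proof -
    have "\<pi> (\<iota> q) = q" if "q \<in> Poly_Mapping.keys n" for q
      using that n \<iota>(2) by blast
    then have "mono_exp (\<lambda>q. \<sigma>\<^sub>A (fst q)) n = mono_exp (\<lambda>q. \<sigma>\<^sub>A (fst (\<pi> (\<iota> q)))) n"
      "mono_exp (\<lambda>q. \<sigma>\<^sub>B (snd q)) n = mono_exp (\<lambda>q. \<sigma>\<^sub>B (snd (\<pi> (\<iota> q)))) n"
      by (intro mono_exp_cong; simp)+
    then show ?thesis
      by (simp only: mono_exp_glued mono_exp_rename_exp)
  qed
  have keys_\<iota>: "Poly_Mapping.keys (rename_exp \<iota> n) \<subseteq> M" if "Poly_Mapping.keys n \<subseteq> \<pi> ` M" for n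
    using that keys_rename_exp[of \<iota> n] \<iota>(1) by blast
  have keys_g: "Poly_Mapping.keys n \<subseteq> \<pi> ` M" if "n \<in> Poly_Mapping.keys g" for n
    using that g unfolding toric_fiber_product_def poly_ring_def vars_def by blast
  have "mono_map (\<lambda>q. \<sigma> (\<iota> q)) g = 0"
  proof (rule mono_map_eq_0_if_same_fibres[OF toric_fiber_product_in_kernel[OF g]])
    fix n n' assume "n \<in> Poly_Mapping.keys g" "n' \<in> Poly_Mapping.keys g"
    with keys_g have n: "Poly_Mapping.keys n \<subseteq> \<pi> ` M" and n': "Poly_Mapping.keys n' \<subseteq> \<pi> ` M"
      by blast+
    show "mono_exp ?\<kappa> n = mono_exp ?\<kappa> n' \<longleftrightarrow>
        mono_exp (\<lambda>q. \<sigma> (\<iota> q)) n = mono_exp (\<lambda>q. \<sigma> (\<iota> q)) n'"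
      unfolding \<kappa>[OF n] \<kappa>[OF n'] rename_exp_Inl_Inr_eq_iff mono_exp_rename_exp[symmetric]
      using same_fibres[OF keys_\<iota>[OF n] keys_\<iota>[OF n']] by simp
  qed
  then show ?thesis
    unfolding mono_map_rename .
qed

lemma toric_fiber_product_subset_rename:
  "toric_fiber_product (\<pi> ` M) A B (toric_ideal A \<sigma>\<^sub>A) (toric_ideal B \<sigma>\<^sub>B)
     \<subseteq> rename \<pi> ` (toric_ideal M \<sigma> :: ('v, 'k::field) mpoly set)"
proof
  fix g :: "('a \<times> 'b, 'k) mpoly"
  assume g: "g \<in> toric_fiber_product (\<pi> ` M) A B (toric_ideal A \<sigma>\<^sub>A) (toric_ideal B \<sigma>\<^sub>B)"
  then have vars_g: "vars g \<subseteq> \<pi> ` M"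
    unfolding toric_fiber_product_def poly_ring_def by blast
  define \<iota> where "\<iota> = inv_into M \<pi>"
  have \<iota>: "\<iota> q \<in> M" "\<pi> (\<iota> q) = q" if "q \<in> \<pi> ` M" for q
    unfolding \<iota>_def using that by (auto intro: inv_into_into f_inv_into_f)
  have "rename \<pi> (rename \<iota> g) = rename (\<lambda>q. q) g"
    unfolding mono_map_rename
  proof (rule mono_map_cong)
    fix q assume "q \<in> vars g"
    then have "\<pi> (\<iota> q) = q"
      using vars_g \<iota>(2) by blast
    then show "Poly_Mapping.single (\<pi> (\<iota> q)) 1 = Poly_Mapping.single q 1"
      by (rule arg_cong)
  qed
  then have "g = rename \<pi> (rename \<iota> g)"
    by (simp only: rename_id)
  moreover have "rename \<iota> g \<in> toric_ideal M \<sigma>"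
    using vars_rename[of \<iota> g] vars_g \<iota> toric_fiber_product_rename_section_in_kernel[OF g]
    unfolding toric_ideal_def poly_ring_def by blast
  ultimately show "g \<in> rename \<pi> ` toric_ideal M \<sigma>"
    by (rule image_eqI)
qed

theorem rename_toric_ideal_eq_toric_fiber_product:
  "rename \<pi> ` (toric_ideal M \<sigma> :: ('v, 'k::field) mpoly set)
     = toric_fiber_product (\<pi> ` M) A B (toric_ideal A \<sigma>\<^sub>A) (toric_ideal B \<sigma>\<^sub>B)"
  using rename_toric_ideal_subset toric_fiber_product_subset_rename by (rule equalityI)

end

section \<open>Trees\<close>

lemma rtrancl_adj_sym:
  assumes "(x, y) \<in> (adj F)\<^sup>*"
  shows "(y, x) \<in> (adj F)\<^sup>*"
proof -
  have "sym (adj F)"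
    unfolding adj_def sym_def by (auto simp: insert_commute)
  then show ?thesis
    using symD[OF sym_rtrancl assms] by blast
qed

lemma exists_adj_closer:
  assumes "(x, r) \<in> (adj F)\<^sup>*" "x \<noteq> r"
  shows "\<exists>y. (x, y) \<in> adj F \<and>
    (LEAST n. (y, r) \<in> adj F ^^ n) < (LEAST n. (x, r) \<in> adj F ^^ n)"
proof -
  let ?d = "\<lambda>z. LEAST n. (z, r) \<in> adj F ^^ n"
  obtain n where "(x, r) \<in> adj F ^^ n"
    using assms(1) rtrancl_power by blast
  then have x: "(x, r) \<in> adj F ^^ ?d x"
    by (rule LeastI)
  then obtain k where k: "?d x = Suc k"
    using assms(2) by (cases "?d x") auto
  then obtain y where y: "(x, y) \<in> adj F" "(y, r) \<in> adj F ^^ k"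
    using x relpow_Suc_D2 by metis
  have "?d y \<le> k"
    using y(2) by (rule Least_le)
  with y(1) k show ?thesis
    by auto
qed

text \<open>Every vertex other than \<open>r\<close> is sent injectively to the edge leading to a
  neighbour closer to \<open>r\<close>.\<close>

lemma card_le_card_edges_Suc_if_connected:
  assumes "finite F" and conn: "\<And>x. x \<in> V \<Longrightarrow> (x, r) \<in> (adj F)\<^sup>*"
  shows "card V \<le> card F + 1"
proof -
  define d where "d x = (LEAST n. (x, r) \<in> adj F ^^ n)" for x
  define nbr where "nbr x = (SOME y. (x, y) \<in> adj F \<and> d y < d x)" for x
  have nbr: "(x, nbr x) \<in> adj F \<and> d (nbr x) < d x" if "x \<in> V - {r}" for x
  proof -
    have "\<exists>y. (x, y) \<in> adj F \<and> d y < d x"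
      unfolding d_def using that conn by (intro exists_adj_closer) auto
    then show ?thesis
      unfolding nbr_def by (rule someI_ex)
  qed
  have "inj_on (\<lambda>x. {x, nbr x}) (V - {r})"
  proof (rule inj_onI)
    fix x x' assume x: "x \<in> V - {r}" and x': "x' \<in> V - {r}" and eq: "{x, nbr x} = {x', nbr x'}"
    show "x = x'"
    proof (rule ccontr)
      assume "x \<noteq> x'"
      with eq have "x = nbr x'" "x' = nbr x"
        by (auto simp: doubleton_eq_iff)
      with nbr[OF x] nbr[OF x'] have "d x' < d x \<and> d x < d x'"
        by metis
      then show False
        by linarith
    qed
  qed
  moreover have "(\<lambda>x. {x, nbr x}) ` (V - {r}) \<subseteq> F"
    using nbr unfolding adj_def by auto
  ultimately have "card (V - {r}) \<le> card F"
    using assms(1) by (rule card_inj_on_le)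
  moreover have "card V \<le> card (V - {r}) + 1"
    by (cases "finite V") (auto simp: card_Diff_singleton_if)
  ultimately show ?thesis
    by linarith
qed

lemma tree_finite_edges: "is_tree V E \<Longrightarrow> finite E"
  unfolding is_tree_def by (meson Pow_iff finite_Pow_iff finite_subset subsetI)

lemma tree_edge_subset: "is_tree V E \<Longrightarrow> f \<in> E \<Longrightarrow> f \<subseteq> V"
  unfolding is_tree_def by blast

lemma tree_edge_bridge:
  assumes T: "is_tree V E" and e: "{a, b} \<in> E"
  shows "(a, b) \<notin> (adj (E - {{a, b}}))\<^sup>*"
proof
  let ?E' = "E - {{a, b}}"
  assume ab: "(a, b) \<in> (adj ?E')\<^sup>*"
  have "adj E \<subseteq> (adj ?E')\<^sup>*"
  proof
    fix z assume "z \<in> adj E"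
    then obtain x y where z: "z = (x, y)" "{x, y} \<in> E" "x \<noteq> y"
      unfolding adj_def by auto
    show "z \<in> (adj ?E')\<^sup>*"
    proof (cases "{x, y} = {a, b}")
      case True
      then have "(x, y) = (a, b) \<or> (x, y) = (b, a)"
        by (auto simp: doubleton_eq_iff)
      then show ?thesis
        using ab rtrancl_adj_sym[OF ab] z(1) by auto
    next
      case False
      then show ?thesis
        using z unfolding adj_def by auto
    qed
  qed
  then have conn: "(adj E)\<^sup>* \<subseteq> (adj ?E')\<^sup>*"
    by (rule rtrancl_subset_rtrancl)
  obtain r where r: "r \<in> V"
    using T unfolding is_tree_def by blast
  have "(x, r) \<in> (adj ?E')\<^sup>*" if "x \<in> V" for x
    using T that r conn unfolding is_tree_def by blast
  then have "card V \<le> card ?E' + 1"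
    using tree_finite_edges[OF T] by (intro card_le_card_edges_Suc_if_connected) auto
  moreover have "card ?E' + 1 = card E"
    using e tree_finite_edges[OF T] card_Suc_Diff1 by fastforce
  ultimately show False
    using T unfolding is_tree_def by linarith
qed

definition triangle_free :: "nat set set \<Rightarrow> bool" where
  "triangle_free F \<longleftrightarrow>
     (\<forall>a b c. {a, b} \<in> F \<longrightarrow> {b, c} \<in> F \<longrightarrow> {a, c} \<in> F \<longrightarrow> a = b \<or> b = c \<or> a = c)"

lemma triangle_free_subset: "triangle_free E \<Longrightarrow> F \<subseteq> E \<Longrightarrow> triangle_free F"
  unfolding triangle_free_def by blast

lemma tree_triangle_free:
  assumes T: "is_tree V E"
  shows "triangle_free E"
  unfolding triangle_free_def
proof (intro allI impI)
  fix a b c assume ab: "{a, b} \<in> E" and bc: "{b, c} \<in> E" and ac: "{a, c} \<in> E"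
  show "a = b \<or> b = c \<or> a = c"
  proof (rule ccontr)
    assume "\<not> ?thesis"
    then have "(a, c) \<in> adj (E - {{a, b}})" "(c, b) \<in> adj (E - {{a, b}})"
      using ab bc ac unfolding adj_def by (auto simp: doubleton_eq_iff insert_commute)
    then have "(a, b) \<in> (adj (E - {{a, b}}))\<^sup>*"
      by (meson converse_rtrancl_into_rtrancl r_into_rtrancl)
    then show False
      using tree_edge_bridge[OF T ab] by blast
  qed
qed

lemma tree_component_cover:
  assumes T: "is_tree V E" and e: "{u, v} \<in> E" and x: "x \<in> V"
  shows "x \<in> component V (E - {{u, v}}) u \<union> component V (E - {{u, v}}) v"
proof -
  let ?R = "adj (E - {{u, v}})"
  have u: "u \<in> V"
    using tree_edge_subset[OF T e] by auto
  then have "(u, x) \<in> (adj E)\<^sup>*"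
    using T x unfolding is_tree_def by blast
  then have "(u, x) \<in> ?R\<^sup>* \<or> (v, x) \<in> ?R\<^sup>*"
  proof (induction rule: rtrancl_induct)
    case (step y z)
    then have yz: "{y, z} \<in> E" "y \<noteq> z"
      unfolding adj_def by auto
    show ?case
    proof (cases "{y, z} = {u, v}")
      case True
      then show ?thesis
        by (auto simp: doubleton_eq_iff)
    next
      case False
      then have "(y, z) \<in> ?R"
        using yz unfolding adj_def by auto
      then show ?thesis
        using step.IH by (meson rtrancl.rtrancl_into_rtrancl)
    qed
  qed simp
  then show ?thesis
    using x unfolding component_def by auto
qed

section \<open>Characteristic imsets on triangle-free skeletons\<close>

lemma dag_irrefl: "is_dag W D \<Longrightarrow> (a, b) \<in> D \<Longrightarrow> a \<noteq> b"
  unfolding is_dag_def acyclic_def by auto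

lemma in_skeleton: "(a, b) \<in> D \<Longrightarrow> {a, b} \<in> skeleton D"
  unfolding skeleton_def by auto

lemma skeletonD: "{a, b} \<in> skeleton D \<Longrightarrow> (a, b) \<in> D \<or> (b, a) \<in> D"
  unfolding skeleton_def by (auto simp: doubleton_eq_iff)

lemma fst_pattern: "fst (pattern D) = {(i, j) \<in> D. in_v_structure D i j}"
  unfolding pattern_def by simp

lemma in_v_structure_iff:
  "in_v_structure D i j \<longleftrightarrow> (i, j) \<in> D \<and> (\<exists>k. (k, j) \<in> D \<and> k \<noteq> i \<and> \<not> adjacent D i k)"
  unfolding in_v_structure_def v_structure_def adjacent_def by blast

lemma exists_third_element:
  assumes "3 \<le> card S"
  shows "\<exists>k\<in>S. k \<noteq> i \<and> k \<noteq> j"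
proof (rule ccontr)
  assume "\<not> ?thesis"
  then have "card S \<le> card {i, j}"
    by (intro card_mono) auto
  also have "\<dots> \<le> 2"
    by (simp add: card_insert_if)
  finally show False
    using assms by simp
qed

text \<open>When the skeleton has no triangles, each arrow of a star with at least three
  vertices lies in a v-structure, so \<open>c\<^sub>D\<close> only depends on the pattern of \<open>D\<close>.\<close>

lemma char_imset_iff_pattern:
  assumes tf: "triangle_free (skeleton D)" and card: "2 \<le> card S"
  shows "char_imset D S \<longleftrightarrow> (card S = 2 \<and> S \<in> skeleton D) \<or>
           (3 \<le> card S \<and> (\<exists>i\<in>S. \<forall>j\<in>S - {i}. (j, i) \<in> fst (pattern D)))"
proof (cases "card S = 2")
  case True
  then obtain a b where S: "S = {a, b}" "a \<noteq> b"
    by (meson card_2_iff)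
  then have "char_imset D S \<longleftrightarrow> (b, a) \<in> D \<or> (a, b) \<in> D"
    unfolding char_imset_def parents_def by auto
  also have "\<dots> \<longleftrightarrow> S \<in> skeleton D"
    using in_skeleton[of a b D] in_skeleton[of b a D] skeletonD[of a b D] S(1)
    by (auto simp: insert_commute)
  finally show ?thesis
    using True by simp
next
  case False
  with card have card3: "3 \<le> card S"
    by simp
  have "char_imset D S \<longleftrightarrow> (\<exists>i\<in>S. \<forall>j\<in>S - {i}. (j, i) \<in> fst (pattern D))"
  proof
    assume "char_imset D S"
    then obtain i where i: "i \<in> S" "S - {i} \<subseteq> parents D i"
      unfolding char_imset_def by blast
    have "(j, i) \<in> fst (pattern D)" if j: "j \<in> S - {i}" for j
    proof -
      obtain k where k: "k \<in> S" "k \<noteq> i" "k \<noteq> j"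
        using exists_third_element[OF card3] by blast
      have ji: "(j, i) \<in> D" and ki: "(k, i) \<in> D"
        using i(2) j k unfolding parents_def by auto
      have "\<not> adjacent D j k"
      proof
        assume "adjacent D j k"
        then have "{j, k} \<in> skeleton D"
          unfolding adjacent_def using in_skeleton[of j k D] in_skeleton[of k j D]
          by (metis insert_commute)
        moreover have "{k, i} \<in> skeleton D" "{j, i} \<in> skeleton D"
          using in_skeleton[OF ki] in_skeleton[OF ji] .
        ultimately have "j = k \<or> k = i \<or> j = i"
          using tf unfolding triangle_free_def by blast
        then show False
          using j k by blast
      qed
      then show ?thesis
        unfolding fst_pattern in_v_structure_iff using ji ki k by auto
    qed
    then show "\<exists>i\<in>S. \<forall>j\<in>S - {i}. (j, i) \<in> fst (pattern D)"
      using i(1) by blast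
  next
    assume "\<exists>i\<in>S. \<forall>j\<in>S - {i}. (j, i) \<in> fst (pattern D)"
    then show "char_imset D S"
      unfolding char_imset_def parents_def fst_pattern by auto
  qed
  then show ?thesis
    using card3 False by simp
qed

lemma rep_dag:
  assumes "P \<in> meq W F"
  shows "is_dag W (rep_dag W F P) \<and> skeleton (rep_dag W F P) = F \<and> pattern (rep_dag W F P) = P"
proof -
  from assms obtain D where "is_dag W D \<and> skeleton D = F \<and> pattern D = P"
    unfolding meq_def by blast
  then show ?thesis
    unfolding rep_dag_def by (rule someI)
qed

lemma lookup_psi_mono:
  assumes "finite W"
  shows "Poly_Mapping.lookup (psi_mono W F P) S =
    (if S \<subseteq> W \<and> 2 \<le> card S \<and> char_imset (rep_dag W F P) S then 1 else 0)"
proof -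
  let ?A = "{S. S \<subseteq> W \<and> 2 \<le> card S \<and> char_imset (rep_dag W F P) S}"
  have "finite ?A"
    using assms by (rule rev_finite_subset[OF finite_Pow_iff[THEN iffD2]]) auto
  then show ?thesis
    unfolding psi_mono_def lookup_sum by (simp add: lookup_single when_def)
qed

section \<open>The two sides of a tree edge\<close>

locale tree_edge =
  fixes V :: "nat set" and E :: "nat set set" and u v :: nat
  assumes tree: "is_tree V E" and edge: "{u, v} \<in> E"
begin

abbreviation "C \<equiv> component V (E - {{u, v}}) u"
abbreviation "V\<^sub>u \<equiv> side_vertices V E u v"
abbreviation "E\<^sub>u \<equiv> side_edges V E u v"

lemma finite_V: "finite V"
  using tree unfolding is_tree_def by blast

lemma u_in_V: "u \<in> V" and v_in_V: "v \<in> V"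
  using tree_edge_subset[OF tree edge] by auto

lemma u_in_C: "u \<in> C"
  unfolding component_def using u_in_V by blast

lemma v_notin_C: "v \<notin> C"
  unfolding component_def using tree_edge_bridge[OF tree edge] by blast

lemma V\<^sub>u_subset: "V\<^sub>u \<subseteq> V"
  unfolding side_vertices_def component_def using v_in_V by blast

lemma u_in_V\<^sub>u: "u \<in> V\<^sub>u" and v_in_V\<^sub>u: "v \<in> V\<^sub>u"
  unfolding side_vertices_def using u_in_C by auto

lemma in_C_iff: "x \<in> C \<longleftrightarrow> x \<in> V\<^sub>u \<and> x \<noteq> v"
  unfolding side_vertices_def using v_notin_C by blast

lemma edge_leaving_C:
  assumes x: "x \<in> C" and xy: "{x, y} \<in> E"
  shows "y \<in> C \<or> (x = u \<and> y = v)"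
proof (cases "{x, y} = {u, v} \<or> x = y")
  case True
  then show ?thesis
    using x v_notin_C by (auto simp: doubleton_eq_iff)
next
  case False
  have "(u, x) \<in> (adj (E - {{u, v}}))\<^sup>*"
    using x unfolding component_def by blast
  moreover have "(x, y) \<in> adj (E - {{u, v}})"
    using xy False unfolding adj_def by auto
  ultimately have "(u, y) \<in> (adj (E - {{u, v}}))\<^sup>*"
    by (rule rtrancl_into_rtrancl)
  moreover have "y \<in> V"
    using tree_edge_subset[OF tree xy] by auto
  ultimately show ?thesis
    unfolding component_def by blast
qed

lemma neighbour_in_V\<^sub>u: "x \<in> V\<^sub>u \<Longrightarrow> x \<noteq> v \<Longrightarrow> {x, y} \<in> E \<Longrightarrow> y \<in> V\<^sub>u"
  using edge_leaving_C in_C_iff v_in_V\<^sub>u by blast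

lemma neighbour_of_v_in_V\<^sub>u: "x \<in> V\<^sub>u \<Longrightarrow> x \<noteq> v \<Longrightarrow> {x, v} \<in> E \<Longrightarrow> x = u"
  using edge_leaving_C in_C_iff by blast

lemma E\<^sub>u_subset: "E\<^sub>u \<subseteq> E"
  unfolding side_edges_def using edge by blast

lemma E\<^sub>u_within_V\<^sub>u: "f \<in> E\<^sub>u \<Longrightarrow> f \<subseteq> V\<^sub>u"
  unfolding side_edges_def side_vertices_def using u_in_C by auto

lemma in_E\<^sub>u_iff:
  assumes ab: "a \<in> V\<^sub>u" "b \<in> V\<^sub>u" "a \<noteq> b"
  shows "{a, b} \<in> E\<^sub>u \<longleftrightarrow> {a, b} \<in> E"
proof
  assume e: "{a, b} \<in> E"
  show "{a, b} \<in> E\<^sub>u"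
  proof (cases "{a, b} = {u, v}")
    case False
    have "a \<noteq> v" "b \<noteq> v"
      using neighbour_of_v_in_V\<^sub>u[of a] neighbour_of_v_in_V\<^sub>u[of b] ab e False
      by (auto simp: insert_commute)
    then have "{a, b} \<subseteq> C"
      using ab in_C_iff by auto
    then show ?thesis
      using e False unfolding side_edges_def by auto
  qed (simp add: side_edges_def)
qed (use E\<^sub>u_subset in blast)

lemma parent_in_V\<^sub>u:
  "skeleton D = E \<Longrightarrow> (k, b) \<in> D \<Longrightarrow> b \<in> V\<^sub>u \<Longrightarrow> b \<noteq> v \<Longrightarrow> k \<in> V\<^sub>u"
  using in_skeleton[of k b D] neighbour_in_V\<^sub>u[of b k] by (simp add: insert_commute)

lemma skeleton_restrict:
  assumes dag: "is_dag V D" and sk: "skeleton D = E"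
  shows "skeleton (D \<inter> V\<^sub>u \<times> V\<^sub>u) = E\<^sub>u"
proof
  show "skeleton (D \<inter> V\<^sub>u \<times> V\<^sub>u) \<subseteq> E\<^sub>u"
  proof
    fix f assume "f \<in> skeleton (D \<inter> V\<^sub>u \<times> V\<^sub>u)"
    then obtain i j where f: "f = {i, j}" "(i, j) \<in> D" "i \<in> V\<^sub>u" "j \<in> V\<^sub>u"
      unfolding skeleton_def by blast
    then show "f \<in> E\<^sub>u"
      using in_E\<^sub>u_iff dag_irrefl[OF dag] in_skeleton[of i j D] sk by blast
  qed
next
  show "E\<^sub>u \<subseteq> skeleton (D \<inter> V\<^sub>u \<times> V\<^sub>u)"
  proof
    fix f assume f: "f \<in> E\<^sub>u"
    then have "card f = 2"
      using E\<^sub>u_subset tree unfolding is_tree_def by blast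
    then obtain a b where ab: "f = {a, b}"
      by (meson card_2_iff)
    then have "a \<in> V\<^sub>u" "b \<in> V\<^sub>u" "(a, b) \<in> D \<or> (b, a) \<in> D"
      using f E\<^sub>u_within_V\<^sub>u E\<^sub>u_subset skeletonD[of a b D] sk by auto
    then show "f \<in> skeleton (D \<inter> V\<^sub>u \<times> V\<^sub>u)"
      unfolding ab using in_skeleton[of a b] in_skeleton[of b a] by (auto simp: insert_commute)
  qed
qed

text \<open>Inside \<open>V\<^sub>u\<close> the only parent of \<open>v\<close> is \<open>u\<close>, so the arrow \<open>u \<rightarrow> v\<close> loses its
  v-structures, while every other vertex of \<open>V\<^sub>u\<close> keeps all its parents.\<close>

lemma in_v_structure_restrict:
  assumes dag: "is_dag V D" and sk: "skeleton D = E" and ab: "(a, b) \<in> D \<inter> V\<^sub>u \<times> V\<^sub>u"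
  shows "in_v_structure (D \<inter> V\<^sub>u \<times> V\<^sub>u) a b \<longleftrightarrow> in_v_structure D a b \<and> (a, b) \<noteq> (u, v)"
proof (cases "b = v")
  case True
  have u_only: "k = u" if "(k, v) \<in> D" "k \<in> V\<^sub>u" for k
    using that dag_irrefl[OF dag] in_skeleton[of k v D] sk neighbour_of_v_in_V\<^sub>u by blast
  then have "a = u"
    using ab True by blast
  then show ?thesis
    using True u_only unfolding in_v_structure_iff by blast
next
  case False
  have "(k, b) \<in> D \<inter> V\<^sub>u \<times> V\<^sub>u \<longleftrightarrow> (k, b) \<in> D" for k
    using parent_in_V\<^sub>u[OF sk _ _ False] ab by blast
  moreover have "adjacent (D \<inter> V\<^sub>u \<times> V\<^sub>u) a k \<longleftrightarrow> adjacent D a k" if "k \<in> V\<^sub>u" for k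
    using that ab unfolding adjacent_def by blast
  ultimately show ?thesis
    using ab False parent_in_V\<^sub>u[OF sk _ _ False] unfolding in_v_structure_iff by blast
qed

lemma pattern_restrict:
  assumes dag: "is_dag V D" and sk: "skeleton D = E"
  shows "pattern (D \<inter> V\<^sub>u \<times> V\<^sub>u) = restrict_pdg V\<^sub>u u v (pattern D)"
proof -
  let ?D = "D \<inter> V\<^sub>u \<times> V\<^sub>u"
  note inv = in_v_structure_restrict[OF dag sk]
  have uv: "(u, v) \<in> D \<Longrightarrow> (u, v) \<in> ?D"
    using u_in_V\<^sub>u v_in_V\<^sub>u by blast
  have "fst (pattern ?D) = fst (restrict_pdg V\<^sub>u u v (pattern D))"
    unfolding restrict_pdg_def fst_pattern using inv by auto
  moreover have "snd (pattern ?D) = snd (restrict_pdg V\<^sub>u u v (pattern D))"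
  proof -
    have "snd (pattern ?D) = {{i, j} | i j. (i, j) \<in> ?D \<and> \<not> in_v_structure D i j} \<union>
        (if (u, v) \<in> D \<and> in_v_structure D u v then {{u, v}} else {})"
      unfolding pattern_def using inv uv by auto
    also have "{{i, j} | i j. (i, j) \<in> ?D \<and> \<not> in_v_structure D i j} =
        {f \<in> snd (pattern D). f \<subseteq> V\<^sub>u}"
      unfolding pattern_def by auto
    finally show ?thesis
      unfolding restrict_pdg_def fst_pattern by simp
  qed
  ultimately show ?thesis
    by (simp add: prod_eq_iff)
qed

lemma restrict_pdg_in_meq:
  assumes "P \<in> meq V E"
  shows "restrict_pdg V\<^sub>u u v P \<in> meq V\<^sub>u E\<^sub>u"
proof -
  obtain D where dag: "is_dag V D" and sk: "skeleton D = E" and P: "P = pattern D"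
    using assms unfolding meq_def by auto
  have "is_dag V\<^sub>u (D \<inter> V\<^sub>u \<times> V\<^sub>u)"
    using dag acyclic_subset[of D "D \<inter> V\<^sub>u \<times> V\<^sub>u"] unfolding is_dag_def by blast
  then show ?thesis
    unfolding meq_def P using skeleton_restrict[OF dag sk] pattern_restrict[OF dag sk]
    by (metis (mono_tags, lifting) mem_Collect_eq)
qed

end

context tree_edge
begin

lemma char_imset_restrict:
  assumes P: "P \<in> meq V E" and S: "S \<subseteq> V\<^sub>u" and card: "2 \<le> card S"
  shows "char_imset (rep_dag V\<^sub>u E\<^sub>u (restrict_pdg V\<^sub>u u v P)) S \<longleftrightarrow> char_imset (rep_dag V E P) S"
proof -
  let ?D = "rep_dag V E P" and ?D' = "rep_dag V\<^sub>u E\<^sub>u (restrict_pdg V\<^sub>u u v P)"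
  have D: "is_dag V ?D" "skeleton ?D = E" "pattern ?D = P"
    using rep_dag[OF P] by auto
  have D': "skeleton ?D' = E\<^sub>u" "pattern ?D' = restrict_pdg V\<^sub>u u v P"
    using rep_dag[OF restrict_pdg_in_meq[OF P]] by auto
  have tf: "triangle_free E" "triangle_free E\<^sub>u"
    using tree_triangle_free[OF tree] triangle_free_subset E\<^sub>u_subset by blast+
  have edge_iff: "card S = 2 \<and> S \<in> E\<^sub>u \<longleftrightarrow> card S = 2 \<and> S \<in> E"
    using S in_E\<^sub>u_iff by (auto simp: card_2_iff)
  have star_iff: "(\<exists>i\<in>S. \<forall>j\<in>S - {i}. (j, i) \<in> fst (restrict_pdg V\<^sub>u u v P)) \<longleftrightarrow>
      (\<exists>i\<in>S. \<forall>j\<in>S - {i}. (j, i) \<in> fst P)" if card3: "3 \<le> card S"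
  proof
    assume "\<exists>i\<in>S. \<forall>j\<in>S - {i}. (j, i) \<in> fst P"
    then obtain i where i: "i \<in> S" "\<forall>j\<in>S - {i}. (j, i) \<in> fst P"
      by blast
    have "(j, i) \<noteq> (u, v)" if j: "j \<in> S - {i}" for j
    proof
      assume ji: "(j, i) = (u, v)"
      obtain k where k: "k \<in> S" "k \<noteq> i" "k \<noteq> j"
        using exists_third_element[OF card3] by blast
      then have "(k, v) \<in> fst (pattern ?D)"
        using i ji D(3) by auto
      then have "(k, v) \<in> ?D"
        unfolding fst_pattern by blast
      then have "k = u"
        using neighbour_of_v_in_V\<^sub>u[of k] in_skeleton[of k v] D(2) dag_irrefl[OF D(1)] k(1) S
        by blast
      then show False
        using ji k by simp
    qed
    then show "\<exists>i\<in>S. \<forall>j\<in>S - {i}. (j, i) \<in> fst (restrict_pdg V\<^sub>u u v P)"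
      using i S unfolding restrict_pdg_def by auto
  qed (auto simp: restrict_pdg_def)
  have "char_imset ?D' S \<longleftrightarrow> (card S = 2 \<and> S \<in> E\<^sub>u) \<or>
      (3 \<le> card S \<and> (\<exists>i\<in>S. \<forall>j\<in>S - {i}. (j, i) \<in> fst (restrict_pdg V\<^sub>u u v P)))"
    using char_imset_iff_pattern[of ?D' S] tf(2) card D' by simp
  moreover have "char_imset ?D S \<longleftrightarrow> (card S = 2 \<and> S \<in> E) \<or>
      (3 \<le> card S \<and> (\<exists>i\<in>S. \<forall>j\<in>S - {i}. (j, i) \<in> fst P))"
    using char_imset_iff_pattern[of ?D S] tf(1) card D(2,3) by simp
  ultimately show ?thesis
    using edge_iff star_iff by blast
qed

lemma char_imset_subset_V\<^sub>u:
  assumes "skeleton D = E" "i \<in> C" "i \<in> S" "S - {i} \<subseteq> parents D i"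
  shows "S \<subseteq> V\<^sub>u"
  using assms parent_in_V\<^sub>u[of D _ i] in_C_iff unfolding parents_def by blast

lemma lookup_psi_mono_restrict:
  assumes "P \<in> meq V E"
  shows "Poly_Mapping.lookup (psi_mono V\<^sub>u E\<^sub>u (restrict_pdg V\<^sub>u u v P)) S =
    (if S \<in> Pow V\<^sub>u then Poly_Mapping.lookup (psi_mono V E P) S else 0)"
  using char_imset_restrict[OF assms, of S] V\<^sub>u_subset finite_subset[OF V\<^sub>u_subset finite_V]
  by (auto simp: lookup_psi_mono finite_V)

lemma tree_edge_swap: "tree_edge V E v u"
  by unfold_locales (use tree edge in \<open>simp_all add: insert_commute\<close>)

lemma keys_psi_mono_subset:
  assumes P: "P \<in> meq V E"
  shows "Poly_Mapping.keys (psi_mono V E P) \<subseteq> Pow V\<^sub>u \<union> Pow (side_vertices V E v u)"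
proof
  interpret swap: tree_edge V E v u
    by (rule tree_edge_swap)
  fix S assume "S \<in> Poly_Mapping.keys (psi_mono V E P)"
  then have "S \<subseteq> V" "char_imset (rep_dag V E P) S"
    by (auto simp: in_keys_iff lookup_psi_mono finite_V split: if_splits)
  then obtain i where i: "i \<in> S" "S - {i} \<subseteq> parents (rep_dag V E P) i" "i \<in> V"
    unfolding char_imset_def by blast
  have sk: "skeleton (rep_dag V E P) = E"
    using rep_dag[OF P] by blast
  have "i \<in> C \<or> i \<in> swap.C"
    using tree_component_cover[OF tree edge i(3)] by (simp add: insert_commute)
  then show "S \<in> Pow V\<^sub>u \<union> Pow (side_vertices V E v u)"
    using char_imset_subset_V\<^sub>u[OF sk _ i(1,2)] swap.char_imset_subset_V\<^sub>u[OF sk _ i(1,2)] by blast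
qed

lemma monomial_gluing_parting:
  "monomial_gluing (meq V E) (psi_mono V E) (parting V E u v)
     (meq V\<^sub>u E\<^sub>u) (psi_mono V\<^sub>u E\<^sub>u)
     (meq (side_vertices V E v u) (side_edges V E v u)) (psi_mono (side_vertices V E v u) (side_edges V E v u))"
proof
  interpret swap: tree_edge V E v u
    by (rule tree_edge_swap)
  fix x assume "x \<in> meq V E"
  then show "fst (parting V E u v x) \<in> meq V\<^sub>u E\<^sub>u"
    and "snd (parting V E u v x) \<in> meq (side_vertices V E v u) (side_edges V E v u)"
    unfolding parting_def using restrict_pdg_in_meq swap.restrict_pdg_in_meq by simp_all
next
  interpret swap: tree_edge V E v u
    by (rule tree_edge_swap)
  fix m m' :: "pdg \<Rightarrow>\<^sub>0 nat"
  assume "Poly_Mapping.keys m \<subseteq> meq V E" "Poly_Mapping.keys m' \<subseteq> meq V E"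
  then show "mono_exp (psi_mono V E) m = mono_exp (psi_mono V E) m' \<longleftrightarrow>
      mono_exp (\<lambda>x. psi_mono V\<^sub>u E\<^sub>u (fst (parting V E u v x))) m =
        mono_exp (\<lambda>x. psi_mono V\<^sub>u E\<^sub>u (fst (parting V E u v x))) m' \<and>
      mono_exp (\<lambda>x. psi_mono swap.V\<^sub>u swap.E\<^sub>u (snd (parting V E u v x))) m =
        mono_exp (\<lambda>x. psi_mono swap.V\<^sub>u swap.E\<^sub>u (snd (parting V E u v x))) m'"
    by (intro mono_exp_eq_iff_restrictions[where K\<^sub>1 = "Pow V\<^sub>u" and K\<^sub>2 = "Pow swap.V\<^sub>u"])
      (simp_all add: parting_def lookup_psi_mono_restrict swap.lookup_psi_mono_restrict
        keys_psi_mono_subset)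
qed

end

theorem theorem4p4:
  fixes p u v :: nat and E :: "nat set set"
  assumes "is_tree {1..p} E"
    and "non_leaf_edge E u v"
  shows "mono_map (\<lambda>P. Poly_Mapping.single (parting {1..p} E u v P) 1)
            ` (char_imset_ideal {1..p} E :: (pdg, 'k::field) mpoly set)
       = toric_fiber_product
           (parting {1..p} E u v ` meq {1..p} E)
           (meq (side_vertices {1..p} E u v) (side_edges {1..p} E u v))
           (meq (side_vertices {1..p} E v u) (side_edges {1..p} E v u))
           (char_imset_ideal (side_vertices {1..p} E u v) (side_edges {1..p} E u v))
           (char_imset_ideal (side_vertices {1..p} E v u) (side_edges {1..p} E v u))"
proof -
  have "{u, v} \<in> E"
    using assms(2) unfolding non_leaf_edge_def by blast
  with assms(1) interpret tree_edge "{1..p}" E u v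
    by unfold_locales
  show ?thesis
    unfolding char_imset_ideal_eq_toric_ideal
    by (rule monomial_gluing.rename_toric_ideal_eq_toric_fiber_product[OF monomial_gluing_parting])
qed

end
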